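(* Let $\mathsf{T}_2:S_2\to S_2$ be a universal Turing machine, in the sense that for every Turing machine $\mathsf{T}_1:S_1\to S_1$ there exist $\tau$ and $t(n)$ such that $\mathsf{T}_2$ $(\tau,t(n))$-simulates $\mathsf{T}_1$. Then there is a configuration $s\in S_2$ which is non-halting and which is a periodic point of $\mathsf{T}_2$. Moreover, for every $N$ there is an $L\gg 0$ such that $\mathsf{T}_2$ has at least $N$ distinct periodic orbits of period $L$.
   Context: A Turing machine is given by a finite state set $Q$ (containing a start state $q_0$ and at least one halt state), a finite tape alphabet $\Gamma$ (with a blank symbol $\sqcup$) and a transition function; its configuration set $S=\Gamma^*\times Q\times\Gamma^*$ consists of finite strings $x_1\cdots x_{m-1}\,q\,x_m\cdots x_n$ recording the tape contents, the head position and the current state, and the machine is viewed as the one-step map $\mathsf{T}:S\to S$. A configuration is halting if its state is a halt state. Given Turing machines $\mathsf{T}_1:S_1\to S_1$, $\mathsf{T}_2:S_2\to S_2$, we say $\mathsf{T}_2$ $(\tau,t(n))$-simulates $\mathsf{T}_1$ if there exist: an encoder $\mathcal E:S_1\to S_2$ computed by a 2-tape Turing machine in time $O(t(|s|))$; a partial decoder $\mathcal D:S_2\rightharpoonup S_1$ computed by a 2-tape Turing machine which, on an input in its domain, halts in time $O(t(|\mathcal D(x)|))$ with the output written on one tape and the input tape erased; and a slowdown function $\tau:S_2\rightharpoonup\mathbb Z_{\ge 0}$ defined exactly on the domain of $\mathcal D$, computable by a Turing machine; such that, with $C_s:=\mathcal D^{-1}(s)$ and $\mathsf{T}_2^\tau(x):=\mathsf{T}_2^{\tau(x)}(x)$,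 we have $\mathcal E(s)\in C_s$ and $\mathcal D(\mathsf{T}_2^\tau(C_s))=\{\mathsf{T}_1(s)\}$ for all $s\in S_1$. *)

theory Defs
  imports Main
begin

datatype dir = MoveL | MoveR

record tm =
  states   :: "nat set"
  symbols  :: "nat set"
  blank    :: nat
  start    :: nat
  halting  :: "nat set"
  delta    :: "nat \<Rightarrow> nat \<Rightarrow> nat \<times> nat \<times> dir"

definition tm_wf :: "tm \<Rightarrow> bool" where
  "tm_wf M \<longleftrightarrow> finite (states M) \<and> finite (symbols M) \<and> blank M \<in> symbols M
     \<and> start M \<in> states M \<and> halting M \<subseteq> states M \<and> halting M \<noteq> {}
     \<and> (\<forall>q \<in> states M - halting M. \<forall>a \<in> symbols M.
           fst (delta M q a) \<in> states M \<and> fst (snd (delta M q a)) \<in> symbols M)"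

text \<open>A configuration x_1 ... x_(m-1) q x_m ... x_n is the triple
  ([x_1,...,x_(m-1)], q, [x_m,...,x_n]) (left part in normal order); the head reads x_m,
  or the blank if the right part is empty.\<close>
type_synonym config = "nat list \<times> nat \<times> nat list"

definition configs :: "tm \<Rightarrow> config set" where
  "configs M = {(l, q, r). set l \<subseteq> symbols M \<and> q \<in> states M \<and> set r \<subseteq> symbols M}"

definition csize :: "config \<Rightarrow> nat" where
  "csize s = (case s of (l, q, r) \<Rightarrow> length l + 1 + length r)"

definition is_halting :: "tm \<Rightarrow> config \<Rightarrow> bool" where
  "is_halting M s \<longleftrightarrow> fst (snd s) \<in> halting M"

text \<open>One-step map T : S \<rightarrow> S (halting configurations are fixed; the tape is two-way
  infinite, so moving off either end extends the string by a blank).\<close>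
definition step :: "tm \<Rightarrow> config \<Rightarrow> config" where
  "step M s = (case s of (l, q, r) \<Rightarrow>
     if q \<in> halting M then (l, q, r) else
     (let a = (case r of [] \<Rightarrow> blank M | x # _ \<Rightarrow> x);
          (q', b, d) = delta M q a
      in case d of
           MoveR \<Rightarrow> (l @ [b], q', tl r)
         | MoveL \<Rightarrow> (if l = [] then ([], q', blank M # b # tl r)
                     else (butlast l, q', last l # b # tl r))))"

definition orbit :: "tm \<Rightarrow> config \<Rightarrow> config set" where
  "orbit M s = {(step M ^^ k) s | k. True}"

text \<open>Tape symbols of auxiliary machines: Tp g and St q encode tape symbols and states of
  the simulated machines' configurations; Wk n are working symbols, Wk 0 is the blank.\<close>
datatype csym = Tp nat | St nat | Wk nat

abbreviation bl :: csym where "bl \<equiv> Wk 0"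

record tm2 =
  states2  :: "nat set"
  alph2    :: "csym set"
  start2   :: nat
  halting2 :: "nat set"
  delta2   :: "nat \<Rightarrow> csym \<Rightarrow> csym \<Rightarrow> nat \<times> csym \<times> csym \<times> dir \<times> dir"

definition tm2_wf :: "tm2 \<Rightarrow> bool" where
  "tm2_wf M \<longleftrightarrow> finite (states2 M) \<and> finite (alph2 M) \<and> bl \<in> alph2 M
     \<and> start2 M \<in> states2 M \<and> halting2 M \<subseteq> states2 M \<and> halting2 M \<noteq> {}
     \<and> (\<forall>q \<in> states2 M - halting2 M. \<forall>a \<in> alph2 M. \<forall>b \<in> alph2 M.
          (case delta2 M q a b of (q', a', b', d1, d2) \<Rightarrow>
             q' \<in> states2 M \<and> a' \<in> alph2 M \<and> b' \<in> alph2 M))"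

text \<open>A tape is (reversed part left of the head, part from the head on).\<close>
type_synonym tape = "csym list \<times> csym list"

definition tread :: "tape \<Rightarrow> csym" where
  "tread t = (case snd t of [] \<Rightarrow> bl | x # _ \<Rightarrow> x)"

definition tmove :: "dir \<Rightarrow> csym \<Rightarrow> tape \<Rightarrow> tape" where
  "tmove d b t = (case t of (l, r) \<Rightarrow> (case d of
       MoveR \<Rightarrow> (b # l, tl r)
     | MoveL \<Rightarrow> (tl l, (case l of [] \<Rightarrow> bl | x # _ \<Rightarrow> x) # b # tl r)))"

definition trim :: "csym list \<Rightarrow> csym list" where
  "trim w = rev (dropWhile (\<lambda>x. x = bl) (rev (dropWhile (\<lambda>x. x = bl) w)))"

definition content :: "tape \<Rightarrow> csym list" where
  "content t = trim (rev (fst t) @ snd t)"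

type_synonym config2 = "nat \<times> tape \<times> tape"

definition step2 :: "tm2 \<Rightarrow> config2 \<Rightarrow> config2" where
  "step2 M c = (case c of (q, t1, t2) \<Rightarrow>
     if q \<in> halting2 M then (q, t1, t2) else
     (case delta2 M q (tread t1) (tread t2) of (q', b1, b2, d1, d2) \<Rightarrow>
        (q', tmove d1 b1 t1, tmove d2 b2 t2)))"

definition init2 :: "tm2 \<Rightarrow> csym list \<Rightarrow> config2" where
  "init2 M w = (start2 M, ([], w), ([], []))"

definition runs_within :: "tm2 \<Rightarrow> csym list \<Rightarrow> nat \<Rightarrow> csym list \<Rightarrow> bool \<Rightarrow> bool" where
  "runs_within M w k out erase \<longleftrightarrow>
     (\<exists>j \<le> k. (case (step2 M ^^ j) (init2 M w) of (q, t1, t2) \<Rightarrow>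
        q \<in> halting2 M \<and> content t2 = out \<and> (erase \<longrightarrow> content t1 = [])))"

definition cword :: "config \<Rightarrow> csym list" where
  "cword s = (case s of (l, q, r) \<Rightarrow> map Tp l @ St q # map Tp r)"

definition nword :: "nat \<Rightarrow> csym list" where
  "nword n = replicate n (Wk 1)"

definition encoder_ok :: "tm \<Rightarrow> (config \<Rightarrow> config) \<Rightarrow> (nat \<Rightarrow> nat) \<Rightarrow> bool" where
  "encoder_ok T1 E t \<longleftrightarrow> (\<exists>M. tm2_wf M
     \<and> (\<forall>s \<in> configs T1. set (cword s) \<subseteq> alph2 M \<and> (\<exists>k. runs_within M (cword s) k (cword (E s)) False))
     \<and> (\<exists>c n0. \<forall>s \<in> configs T1. csize s \<ge> n0 \<longrightarrow>
            runs_within M (cword s) (c * t (csize s)) (cword (E s)) False))"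

definition decoder_ok :: "(config \<Rightarrow> config option) \<Rightarrow> (nat \<Rightarrow> nat) \<Rightarrow> bool" where
  "decoder_ok D t \<longleftrightarrow> (\<exists>M. tm2_wf M
     \<and> (\<forall>x \<in> dom D. set (cword x) \<subseteq> alph2 M \<and> (\<exists>k. runs_within M (cword x) k (cword (the (D x))) True))
     \<and> (\<exists>c n0. \<forall>x \<in> dom D. csize (the (D x)) \<ge> n0 \<longrightarrow>
            runs_within M (cword x) (c * t (csize (the (D x)))) (cword (the (D x))) True))"

definition computable_pfun :: "(config \<Rightarrow> nat option) \<Rightarrow> bool" where
  "computable_pfun f \<longleftrightarrow> (\<exists>M. tm2_wf M
     \<and> (\<forall>x \<in> dom f. set (cword x) \<subseteq> alph2 M \<and> (\<exists>k. runs_within M (cword x) k (nword (the (f x))) False)))"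

definition simulates :: "tm \<Rightarrow> tm \<Rightarrow> (config \<Rightarrow> nat option) \<Rightarrow> (nat \<Rightarrow> nat) \<Rightarrow> bool" where
  "simulates T2 T1 \<tau> t \<longleftrightarrow> (\<exists>E D.
      (\<forall>s \<in> configs T1. E s \<in> configs T2) \<and> encoder_ok T1 E t
    \<and> dom D \<subseteq> configs T2 \<and> ran D \<subseteq> configs T1 \<and> decoder_ok D t
    \<and> dom \<tau> = dom D \<and> computable_pfun \<tau>
    \<and> (\<forall>s \<in> configs T1. D (E s) = Some s
         \<and> (\<forall>x. D x = Some s \<longrightarrow> D ((step T2 ^^ the (\<tau> x)) x) = Some (step T1 s))))"

definition universal :: "tm \<Rightarrow> bool" where
  "universal T2 \<longleftrightarrow> (\<forall>T1. tm_wf T1 \<longrightarrow> (\<exists>\<tau> t. simulates T2 T1 \<tau> t))"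

end

theory Submission
  imports Defs
begin

text \<open>Let T2 simulate the machine shuttle, whose head steps right and back left
  forever, so that its configurations lie on orbits of period 2 and of constant size.
  A decoder run erases its input and each step erases at most one symbol, so the
  configurations of T2 decoding into a shuttle orbit of size m have size O(t(m)) and
  form a finite set. Iterating the simulation from an encoded configuration must therefore
  revisit a configuration of T2, which is then periodic, and it is neither halting nor fixed
  because its decoded configuration changes in every round. Different sizes m yield
  infinitely many such periodic points; their orbits are finite, so N of them have distinct
  orbits, and a common multiple L of their periods is a common period.\<close>

definition nonhalting_periodic_configs :: "tm \<Rightarrow> config set" where
  "nonhalting_periodic_configs T =
     {x \<in> configs T. \<not> is_halting T x \<and> (\<exists>p>0. (step T ^^ p) x = x)}"

lemma funpow_accelerate:
  fixes g :: "'a \<Rightarrow> 'a" and \<tau> :: "'a \<Rightarrow> nat"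
  defines "F \<equiv> \<lambda>x. (g ^^ \<tau> x) x"
  shows "(F ^^ n) x = (g ^^ (\<Sum>m<n. \<tau> ((F ^^ m) x))) x"
proof (induction n)
  case (Suc n)
  have "(F ^^ Suc n) x = (g ^^ \<tau> ((F ^^ n) x)) ((F ^^ n) x)"
    by (simp add: F_def)
  also have "\<dots> = (g ^^ (\<tau> ((F ^^ n) x) + (\<Sum>m<n. \<tau> ((F ^^ m) x)))) x"
    by (subst (2) Suc.IH) (simp add: funpow_add)
  finally show ?case
    by (simp add: add.commute)
qed simp

lemma periodic_point_of_accelerate:
  fixes g :: "'a \<Rightarrow> 'a" and \<tau> :: "'a \<Rightarrow> nat"
  defines "F \<equiv> \<lambda>x. (g ^^ \<tau> x) x"
  assumes "n > 0" and "(F ^^ n) x = x" and "F x \<noteq> x"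
  shows "\<exists>p>0. (g ^^ p) x = x"
proof (intro exI conjI)
  show "(g ^^ (\<Sum>m<n. \<tau> ((F ^^ m) x))) x = x"
    using funpow_accelerate[where g = g and \<tau> = \<tau> and n = n] assms(3) by (simp add: F_def)
  have "\<tau> x > 0"
    using assms(4) by (auto simp: F_def intro: gr0I)
  moreover have "\<tau> x \<le> (\<Sum>m<n. \<tau> ((F ^^ m) x))"
    using member_le_sum[of 0 "{..<n}" "\<lambda>m. \<tau> ((F ^^ m) x)"] \<open>n > 0\<close> by simp
  ultimately show "(\<Sum>m<n. \<tau> ((F ^^ m) x)) > 0"
    by linarith
qed

lemma finite_orbit_of_periodic:
  assumes "p > 0" and "(f ^^ p) x = x"
  shows "finite {(f ^^ k) x | k. True}"
proof (rule finite_subset)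
  show "{(f ^^ k) x | k. True} \<subseteq> (\<lambda>k. (f ^^ k) x) ` {..<p}"
  proof clarify
    fix k
    have "(f ^^ k) x = (f ^^ (k mod p)) x"
      using funpow_mod_eq[OF assms(2)] by simp
    then show "(f ^^ k) x \<in> (\<lambda>k. (f ^^ k) x) ` {..<p}"
      using \<open>p > 0\<close> by auto
  qed
qed simp

lemma many_periodic_orbits_common_period:
  assumes "infinite P" and periodic: "\<forall>x\<in>P. \<exists>p>0. (f ^^ p) x = x"
  shows "\<exists>L>0. \<exists>xs. length xs = N \<and> distinct (map (\<lambda>x. {(f ^^ k) x | k. True}) xs)
           \<and> set xs \<subseteq> P \<and> (\<forall>x\<in>set xs. (f ^^ L) x = x)"
proof (induction N)
  case 0
  show ?case
    by (intro exI[of _ 1]) simp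
next
  case (Suc N)
  let ?orb = "\<lambda>x. {(f ^^ k) x | k. True}"
  obtain L xs where L: "L > 0" "length xs = N" "distinct (map ?orb xs)" "set xs \<subseteq> P"
    and period_L: "\<forall>x\<in>set xs. (f ^^ L) x = x"
    using Suc.IH by auto
  have "finite (?orb x)" if "x \<in> set xs" for x
  proof -
    have "x \<in> P"
      using that L(4) by blast
    then obtain q where "q > 0" "(f ^^ q) x = x"
      using periodic by blast
    then show ?thesis
      by (rule finite_orbit_of_periodic)
  qed
  then have "finite (\<Union>x\<in>set xs. ?orb x)"
    by blast
  with \<open>infinite P\<close> have "\<not> P \<subseteq> (\<Union>x\<in>set xs. ?orb x)"
    using finite_subset by blast
  then obtain y where "y \<in> P" and y_new: "y \<notin> (\<Union>x\<in>set xs. ?orb x)"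
    by blast
  then obtain p where "p > 0" and period_p: "(f ^^ p) y = y"
    using periodic by blast
  have "y \<in> ?orb y"
    by (auto intro: exI[of _ 0])
  with y_new have "?orb y \<notin> ?orb ` set xs"
    by blast
  moreover have "(f ^^ (L * p)) y = y"
    using funpow_mod_eq[where m = "L * p", OF period_p] by simp
  moreover have "(f ^^ (L * p)) x = x" if "x \<in> set xs" for x
    using funpow_mod_eq[where f = f and m = "L * p" and n = L and x = x] period_L that by simp
  ultimately show ?case
    using L \<open>p > 0\<close> \<open>y \<in> P\<close>
    by (intro exI[of _ "L * p"] conjI exI[of _ "y # xs"]) auto
qed

definition nonblanks :: "tape \<Rightarrow> nat" where
  "nonblanks t = length (filter (\<lambda>x. x \<noteq> bl) (rev (fst t) @ snd t))"

lemma nonblanks_tmove: "nonblanks t \<le> Suc (nonblanks (tmove d b t))"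
  by (cases t; cases d; rename_tac l r; case_tac l; case_tac r; auto simp: nonblanks_def tmove_def)

lemma nonblanks_step2: "nonblanks (fst (snd c)) \<le> Suc (nonblanks (fst (snd (step2 M c))))"
  using nonblanks_tmove[of "fst (snd c)"] by (auto simp: step2_def split: prod.splits)

lemma nonblanks_funpow_step2:
  "nonblanks (fst (snd c)) \<le> j + nonblanks (fst (snd ((step2 M ^^ j) c)))"
proof (induction j)
  case (Suc j)
  show ?case
    using Suc.IH nonblanks_step2[of "(step2 M ^^ j) c" M] by simp
qed simp

lemma trim_eq_Nil_iff: "trim w = [] \<longleftrightarrow> set w \<subseteq> {bl}"
proof -
  have "trim w = [] \<longleftrightarrow> (\<forall>x\<in>set (dropWhile (\<lambda>x. x = bl) w). x = bl)"
    by (simp add: trim_def)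
  also have "\<dots> \<longleftrightarrow> set w \<subseteq> {bl}"
    by (induction w) auto
  finally show ?thesis .
qed

lemma content_eq_Nil_iff: "content t = [] \<longleftrightarrow> nonblanks t = 0"
  by (simp add: content_def trim_eq_Nil_iff nonblanks_def filter_empty_conv subset_iff) blast

lemma runs_within_erasing_length_le:
  assumes "runs_within M w k out True" and "bl \<notin> set w"
  shows "length w \<le> k"
proof -
  obtain j where "j \<le> k" and "case (step2 M ^^ j) (init2 M w) of (q, t1, t2) \<Rightarrow>
      q \<in> halting2 M \<and> content t2 = out \<and> (True \<longrightarrow> content t1 = [])"
    using assms(1) unfolding runs_within_def by (elim exE conjE) (rule that)
  moreover from this(2) have "content (fst (snd ((step2 M ^^ j) (init2 M w)))) = []"
    by (simp split: prod.splits)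
  moreover have "filter (\<lambda>x. x \<noteq> bl) w = w"
    using assms(2) by (auto simp: filter_id_conv)
  then have "nonblanks (fst (snd (init2 M w))) = length w"
    by (simp add: nonblanks_def init2_def)
  ultimately show ?thesis
    using nonblanks_funpow_step2[of "init2 M w" j M] by (simp add: content_eq_Nil_iff)
qed

lemma length_cword: "length (cword x) = csize x"
  by (cases x) (auto simp: cword_def csize_def)

lemma bl_notin_cword: "bl \<notin> set (cword x)"
  by (cases x) (auto simp: cword_def)

lemma decoder_ok_input_size_le:
  assumes "decoder_ok D t"
  shows "\<exists>c n0. \<forall>x v. D x = Some v \<longrightarrow> n0 \<le> csize v \<longrightarrow> csize x \<le> c * t (csize v)"
proof -
  obtain M c n0 where "\<forall>x \<in> dom D. csize (the (D x)) \<ge> n0 \<longrightarrow>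
      runs_within M (cword x) (c * t (csize (the (D x)))) (cword (the (D x))) True"
    using assms unfolding decoder_ok_def by blast
  then have "csize x \<le> c * t (csize v)" if "D x = Some v" "n0 \<le> csize v" for x v
    using that runs_within_erasing_length_le[OF _ bl_notin_cword, of M x]
    by (force simp: length_cword)
  then show ?thesis
    by blast
qed

lemma finite_configs_csize_le:
  assumes "tm_wf T"
  shows "finite {x \<in> configs T. csize x \<le> B}"
proof (rule finite_subset)
  let ?W = "{w. set w \<subseteq> symbols T \<and> length w \<le> B}"
  show "{x \<in> configs T. csize x \<le> B} \<subseteq> ?W \<times> states T \<times> ?W"
    by (auto simp: configs_def csize_def)
  show "finite (?W \<times> states T \<times> ?W)"
    using assms by (simp add: tm_wf_def finite_lists_length_le)
qed

lemma funpow_step_halting: "is_halting T x \<Longrightarrow> (step T ^^ n) x = x"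
  by (induction n) (auto simp: step_def is_halting_def split: prod.splits)

lemma funpow_simulation_step:
  assumes ran: "ran D \<subseteq> configs T1"
    and tracks: "\<forall>v\<in>configs T1. \<forall>x. D x = Some v \<longrightarrow>
      D ((step T2 ^^ the (\<tau> x)) x) = Some (step T1 v)"
    and "D x = Some s"
  shows "D (((\<lambda>x. (step T2 ^^ the (\<tau> x)) x) ^^ k) x) = Some ((step T1 ^^ k) s)"
proof (induction k)
  case (Suc k)
  then have "(step T1 ^^ k) s \<in> configs T1"
    using ran by (auto intro: ranI)
  with Suc.IH tracks show ?case
    by (simp del: split_paired_All)
qed (simp add: \<open>D x = Some s\<close>)

lemma simulation_periodic_point:
  assumes dom: "dom D \<subseteq> configs T2" and ran: "ran D \<subseteq> configs T1"
    and tracks: "\<forall>v\<in>configs T1. \<forall>x. D x = Some v \<longrightarrow>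
      D ((step T2 ^^ the (\<tau> x)) x) = Some (step T1 v)"
    and start: "D x0 = Some s"
    and finite_preimage: "finite (D -` Some ` orbit T1 s)"
    and moving: "\<forall>v\<in>orbit T1 s. step T1 v \<noteq> v"
  shows "\<exists>y\<in>nonhalting_periodic_configs T2. D y \<in> Some ` orbit T1 s"
proof -
  define F where "F x = (step T2 ^^ the (\<tau> x)) x" for x
  define X where "X k = (F ^^ k) x0" for k
  have DX: "D (X k) = Some ((step T1 ^^ k) s)" for k
    unfolding X_def F_def[abs_def] using funpow_simulation_step[OF ran tracks start] .
  then have "range X \<subseteq> D -` Some ` orbit T1 s"
    unfolding orbit_def by blast
  then have "\<not> inj X"
    using finite_preimage finite_subset finite_imageD by blast
  then obtain i j where "i < j" and "X i = X j"
    using linorder_injI by metis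
  have "(F ^^ (j - i)) (X i) = X (j - i + i)"
    by (simp add: X_def funpow_add)
  with \<open>i < j\<close> \<open>X i = X j\<close> have cycle: "(F ^^ (j - i)) (X i) = X i"
    by simp
  have in_orbit: "(step T1 ^^ i) s \<in> orbit T1 s"
    by (auto simp: orbit_def)
  then have "D (F (X i)) \<noteq> D (X i)"
    using DX[of i] DX[of "Suc i"] moving by (simp add: X_def)
  then have moves: "F (X i) \<noteq> X i"
    by metis
  then have "\<not> is_halting T2 (X i)"
    by (auto simp: F_def funpow_step_halting)
  moreover have "\<exists>p>0. (step T2 ^^ p) (X i) = X i"
    using periodic_point_of_accelerate[where g = "step T2" and \<tau> = "\<lambda>x. the (\<tau> x)"
        and n = "j - i"] \<open>i < j\<close> cycle moves
    by (simp add: F_def[abs_def])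
  moreover have "X i \<in> configs T2"
    using DX[of i] dom by blast
  ultimately have "X i \<in> nonhalting_periodic_configs T2"
    by (simp add: nonhalting_periodic_configs_def)
  moreover have "D (X i) \<in> Some ` orbit T1 s"
    using DX[of i] in_orbit by simp
  ultimately show ?thesis
    by blast
qed

definition shuttle :: tm where
  "shuttle = \<lparr>states = {0, 1, 2}, symbols = {0, 1}, blank = 0, start = 0, halting = {2},
     delta = (\<lambda>q a. if q = 0 then (1, a, MoveR) else (0, a, MoveL))\<rparr>"

text \<open>Two cells to the right of the head are needed so that the return step does not
  extend the tape.\<close>
definition shuttle_config :: "nat \<Rightarrow> config" where
  "shuttle_config n = ([], 0, replicate (n + 2) 0)"

definition shuttle_config_moved :: "nat \<Rightarrow> config" where
  "shuttle_config_moved n = ([0], 1, replicate (n + 1) 0)"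

lemma shuttle_wf: "tm_wf shuttle"
  by (auto simp: tm_wf_def shuttle_def)

lemma shuttle_config_in_configs: "shuttle_config n \<in> configs shuttle"
  by (auto simp: shuttle_config_def configs_def shuttle_def)

lemma step_shuttle_config: "step shuttle (shuttle_config n) = shuttle_config_moved n"
  by (simp add: step_def shuttle_def shuttle_config_def shuttle_config_moved_def)

lemma step_shuttle_config_moved: "step shuttle (shuttle_config_moved n) = shuttle_config n"
  by (simp add: step_def shuttle_def shuttle_config_def shuttle_config_moved_def)

lemma shuttle_config_moved_neq: "shuttle_config_moved n \<noteq> shuttle_config n"
  by (simp add: shuttle_config_def shuttle_config_moved_def)

lemma orbit_shuttle_config:
  "orbit shuttle (shuttle_config n) = {shuttle_config n, shuttle_config_moved n}"
proof -
  let ?s = "shuttle_config n"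
  have period: "(step shuttle ^^ 2) ?s = ?s"
    by (simp add: numeral_2_eq_2 step_shuttle_config step_shuttle_config_moved)
  have "(step shuttle ^^ k) ?s \<in> {?s, shuttle_config_moved n}" for k
  proof -
    have "(step shuttle ^^ k) ?s = (step shuttle ^^ (k mod 2)) ?s"
      using funpow_mod_eq[OF period] by simp
    moreover have "k mod 2 = 0 \<or> k mod 2 = 1"
      by arith
    ultimately show ?thesis
      by (auto simp: step_shuttle_config)
  qed
  moreover have "?s = (step shuttle ^^ 0) ?s" and "shuttle_config_moved n = (step shuttle ^^ 1) ?s"
    by (simp_all add: step_shuttle_config)
  ultimately show ?thesis
    unfolding orbit_def by blast
qed

lemma shuttle_orbit_moving_same_size:
  assumes "v \<in> orbit shuttle (shuttle_config n)"
  shows "step shuttle v \<noteq> v" and "csize v = n + 3"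
  using assms shuttle_config_moved_neq[of n]
  by (auto simp: orbit_shuttle_config step_shuttle_config step_shuttle_config_moved)
    (simp_all add: shuttle_config_def shuttle_config_moved_def csize_def)

lemma infinite_nonhalting_periodic_configs:
  assumes "tm_wf T2" and "universal T2"
  shows "infinite (nonhalting_periodic_configs T2)"
proof -
  obtain \<tau> t where "simulates T2 shuttle \<tau> t"
    using assms(2) shuttle_wf unfolding universal_def by blast
  then obtain E D where dom: "dom D \<subseteq> configs T2" and ran: "ran D \<subseteq> configs shuttle"
    and decoder: "decoder_ok D t"
    and sim: "\<forall>s\<in>configs shuttle. D (E s) = Some s
       \<and> (\<forall>x. D x = Some s \<longrightarrow> D ((step T2 ^^ the (\<tau> x)) x) = Some (step shuttle s))"
    unfolding simulates_def by blast
  obtain c n0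
    where size: "\<And>x v. D x = Some v \<Longrightarrow> n0 \<le> csize v \<Longrightarrow> csize x \<le> c * t (csize v)"
    using decoder_ok_input_size_le[OF decoder] by metis
  have tracks: "\<forall>v\<in>configs shuttle. \<forall>x. D x = Some v \<longrightarrow>
      D ((step T2 ^^ the (\<tau> x)) x) = Some (step shuttle v)"
    using sim by blast
  let ?orb = "\<lambda>n. orbit shuttle (shuttle_config (n0 + n))"
  have "\<exists>y\<in>nonhalting_periodic_configs T2. D y \<in> Some ` ?orb n" for n
  proof (rule simulation_periodic_point[OF dom ran tracks])
    show "D (E (shuttle_config (n0 + n))) = Some (shuttle_config (n0 + n))"
      using sim shuttle_config_in_configs by blast
    have "D -` Some ` ?orb n \<subseteq> {x \<in> configs T2. csize x \<le> c * t (n0 + n + 3)}"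
      using dom size shuttle_orbit_moving_same_size(2) by fastforce
    then show "finite (D -` Some ` ?orb n)"
      using finite_configs_csize_le[OF assms(1)] by (rule finite_subset)
    show "\<forall>v\<in>?orb n. step shuttle v \<noteq> v"
      using shuttle_orbit_moving_same_size(1) by blast
  qed
  then obtain y
    where y: "\<And>n. y n \<in> nonhalting_periodic_configs T2 \<and> D (y n) \<in> Some ` ?orb n"
    by metis
  have "inj y"
  proof
    fix m n
    assume "y m = y n"
    moreover obtain v w where "D (y m) = Some v" "v \<in> ?orb m" "D (y n) = Some w" "w \<in> ?orb n"
      using y[of m] y[of n] by blast
    ultimately have "n0 + m + 3 = n0 + n + 3"
      using shuttle_orbit_moving_same_size(2) by (metis option.inject)
    then show "m = n"
      by simp
  qed
  moreover have "range y \<subseteq> nonhalting_periodic_configs T2"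
    using y by blast
  ultimately show ?thesis
    using finite_imageD finite_subset infinite_UNIV_nat by metis
qed

theorem lemma3p10:
  fixes T2 :: tm
  assumes "tm_wf T2" and "universal T2"
  shows "(\<exists>s \<in> configs T2. \<not> is_halting T2 s \<and> (\<exists>p > 0. (step T2 ^^ p) s = s))
       \<and> (\<forall>N::nat. \<exists>L > 0. \<exists>xs :: config list. length xs = N
            \<and> distinct (map (orbit T2) xs)
            \<and> (\<forall>x \<in> set xs. x \<in> configs T2 \<and> \<not> is_halting T2 x \<and> (step T2 ^^ L) x = x))"
proof (intro conjI allI)
  let ?P = "nonhalting_periodic_configs T2"
  have infinite: "infinite ?P"
    using infinite_nonhalting_periodic_configs[OF assms] .
  then obtain s where "s \<in> ?P"
    by (metis ex_in_conv finite.emptyI)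
  then show "\<exists>s \<in> configs T2. \<not> is_halting T2 s \<and> (\<exists>p > 0. (step T2 ^^ p) s = s)"
    by (auto simp: nonhalting_periodic_configs_def)
  fix N :: nat
  have "orbit T2 = (\<lambda>x. {(step T2 ^^ k) x | k. True})"
    by (simp add: orbit_def fun_eq_iff)
  then show "\<exists>L > 0. \<exists>xs :: config list. length xs = N
            \<and> distinct (map (orbit T2) xs)
            \<and> (\<forall>x \<in> set xs. x \<in> configs T2 \<and> \<not> is_halting T2 x \<and> (step T2 ^^ L) x = x)"
    using many_periodic_orbits_common_period[OF infinite, of "step T2" N]
    by (auto simp: nonhalting_periodic_configs_def)
qed

end
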